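(* Let $B$ be a supersoluble brace, and let $I$ be an ideal of $B$ which is centrally nilpotent (as a brace). Then $I$ is $B$-centrally nilpotent.
   Context: A brace (skew left brace) is a set $B$ with two binary operations $+$ and $\cdot$ such that $(B,+)$ and $(B,\cdot)$ are groups and $a(b+c)=ab-a+ac$ for all $a,b,c\in B$. $\lambda_a(b)=-a+ab$ defines a homomorphism $\lambda\colon(B,\cdot)\to\operatorname{Aut}(B,+)$. An ideal is a subset that is a subgroup of both groups, normal in both, and invariant under all $\lambda_b$; quotients by ideals are braces, and an ideal is itself a brace. $\operatorname{Soc}(B)=\operatorname{Ker}\lambda\cap Z(B,+)$ and $\zeta(B)=\operatorname{Soc}(B)\cap Z(B,\cdot)$ (both ideals). The upper central series is $\zeta_0(B)=\{0\}$, $\zeta_{k+1}(B)/\zeta_k(B)=\zeta(B/\zeta_k(B))$; $B$ is centrally nilpotent if $B=\zeta_m(B)$ for some $m$. An ideal $I$ of $B$ is $B$-centrally nilpotent if there is a finite chain $\{0\}=I_0\le\dots\le I_n=I$ of ideals of $B$ with $I_{i+1}/I_i\le\zeta(I/I_i)$ for all $i$. $B$ is supersoluble if there is a finite chain of ideals $\{0\}=J_0\le\dots\le J_n=B$ such that for each $i$, either $(J_{i+1}/J_i,+)$ is infinite cyclic and $J_{i+1}/J_i\le\operatorname{Soc}(B/J_i)$, or $J_{i+1}/J_i$ has prime order. *)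

theory Defs
  imports "HOL-Algebra.Algebra" "HOL-Computational_Algebra.Primes"
begin

text \<open>A (skew left) brace: a carrier with an addition, a multiplication and a common
identity element (the additive and multiplicative identities of a brace coincide).\<close>
record 'a brace = "'a partial_object" +
  badd :: "'a \<Rightarrow> 'a \<Rightarrow> 'a"
  bmul :: "'a \<Rightarrow> 'a \<Rightarrow> 'a"
  bzero :: 'a

definition add_group :: "('a, 'b) brace_scheme \<Rightarrow> 'a monoid" where
  "add_group B = \<lparr>carrier = carrier B, monoid.mult = badd B, one = bzero B\<rparr>"

definition mul_group :: "('a, 'b) brace_scheme \<Rightarrow> 'a monoid" where
  "mul_group B = \<lparr>carrier = carrier B, monoid.mult = bmul B, one = bzero B\<rparr>"

definition bneg :: "('a, 'b) brace_scheme \<Rightarrow> 'a \<Rightarrow> 'a" where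
  "bneg B x = inv\<^bsub>add_group B\<^esub> x"

definition blambda :: "('a, 'b) brace_scheme \<Rightarrow> 'a \<Rightarrow> 'a \<Rightarrow> 'a" where
  "blambda B a b = badd B (bneg B a) (bmul B a b)"

definition is_brace :: "('a, 'b) brace_scheme \<Rightarrow> bool" where
  "is_brace B \<longleftrightarrow> group (add_group B) \<and> group (mul_group B) \<and>
     (\<forall>a\<in>carrier B. \<forall>b\<in>carrier B. \<forall>c\<in>carrier B.
        bmul B a (badd B b c) = badd B (badd B (bmul B a b) (bneg B a)) (bmul B a c))"

definition brace_ideal :: "('a, 'b) brace_scheme \<Rightarrow> 'a set \<Rightarrow> bool" where
  "brace_ideal B I \<longleftrightarrow> I \<subseteq> carrier B \<and>
     I \<lhd> add_group B \<and> I \<lhd> mul_group B \<and>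
     (\<forall>b\<in>carrier B. \<forall>x\<in>I. blambda B b x \<in> I)"

definition sub_brace :: "('a, 'b) brace_scheme \<Rightarrow> 'a set \<Rightarrow> 'a brace" where
  "sub_brace B I = \<lparr>carrier = I, badd = badd B, bmul = bmul B, bzero = bzero B\<rparr>"

text \<open>Quotient brace B/J: elements are the cosets of J (additive cosets; for an ideal
they coincide with the multiplicative ones), operations are the set products.\<close>
definition quot_brace :: "('a, 'b) brace_scheme \<Rightarrow> 'a set \<Rightarrow> 'a set brace" where
  "quot_brace B J = \<lparr>carrier = RCOSETS (add_group B) J,
      badd = set_mult (add_group B),
      bmul = set_mult (mul_group B),
      bzero = J\<rparr>"

definition bcoset :: "('a, 'b) brace_scheme \<Rightarrow> 'a set \<Rightarrow> 'a \<Rightarrow> 'a set" where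
  "bcoset B J x = r_coset (add_group B) J x"

definition Soc :: "('a, 'b) brace_scheme \<Rightarrow> 'a set" where
  "Soc B = {a \<in> carrier B. (\<forall>b\<in>carrier B. blambda B a b = b) \<and>
                           (\<forall>b\<in>carrier B. badd B a b = badd B b a)}"

definition zeta :: "('a, 'b) brace_scheme \<Rightarrow> 'a set" where
  "zeta B = {a \<in> Soc B. \<forall>b\<in>carrier B. bmul B a b = bmul B b a}"

definition Soc_mod :: "('a, 'b) brace_scheme \<Rightarrow> 'a set \<Rightarrow> 'a set" where
  "Soc_mod B J = {x \<in> carrier B. bcoset B J x \<in> Soc (quot_brace B J)}"

definition zeta_mod :: "('a, 'b) brace_scheme \<Rightarrow> 'a set \<Rightarrow> 'a set" where
  "zeta_mod B J = {x \<in> carrier B. bcoset B J x \<in> zeta (quot_brace B J)}"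

fun upper_zeta :: "('a, 'b) brace_scheme \<Rightarrow> nat \<Rightarrow> 'a set" where
  "upper_zeta B 0 = {bzero B}"
| "upper_zeta B (Suc k) = zeta_mod B (upper_zeta B k)"

definition centrally_nilpotent :: "('a, 'b) brace_scheme \<Rightarrow> bool" where
  "centrally_nilpotent B \<longleftrightarrow> (\<exists>m. upper_zeta B m = carrier B)"

definition B_centrally_nilpotent :: "('a, 'b) brace_scheme \<Rightarrow> 'a set \<Rightarrow> bool" where
  "B_centrally_nilpotent B I \<longleftrightarrow>
     (\<exists>(n::nat) (Is :: nat \<Rightarrow> 'a set). Is 0 = {bzero B} \<and> Is n = I \<and>
        (\<forall>i\<le>n. brace_ideal B (Is i)) \<and>
        (\<forall>i<n. Is i \<subseteq> Is (Suc i) \<and> Is (Suc i) \<subseteq> zeta_mod (sub_brace B I) (Is i)))"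

definition factor :: "('a, 'b) brace_scheme \<Rightarrow> 'a set \<Rightarrow> 'a set \<Rightarrow> 'a set brace" where
  "factor B J' J = quot_brace (sub_brace B J') J"

definition supersoluble :: "('a, 'b) brace_scheme \<Rightarrow> bool" where
  "supersoluble B \<longleftrightarrow>
     (\<exists>(n::nat) (Js :: nat \<Rightarrow> 'a set). Js 0 = {bzero B} \<and> Js n = carrier B \<and>
        (\<forall>i\<le>n. brace_ideal B (Js i)) \<and>
        (\<forall>i<n. Js i \<subseteq> Js (Suc i) \<and>
           ((infinite (carrier (factor B (Js (Suc i)) (Js i))) \<and>
             cyclic_group (add_group (factor B (Js (Suc i)) (Js i))) \<and>
             Js (Suc i) \<subseteq> Soc_mod B (Js i))
            \<or> Factorial_Ring.prime (card (carrier (factor B (Js (Suc i)) (Js i)))))))"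

end

(*
  Intersecting a supersoluble series (J\<^sub>i) of B with I gives the required series: for
  consecutive terms J \<subseteq> J' one shows that I \<inter> J' is central in the brace I modulo I \<inter> J.
  If I \<inter> J' \<subseteq> J fails, the upper central series of I (which reaches I) yields some
  x \<in> I \<inter> J' - J that is central modulo I \<inter> J.  If J'/J has prime order, x generates J'
  modulo J, so all of I \<inter> J' is central.  If J'/J is infinite cyclic and lies in Soc(B/J),
  it only remains to show \<lambda>\<^sub>y(z) \<equiv> z modulo J for z \<in> I \<inter> J' and y \<in> I; this follows
  from \<lambda>\<^sub>y(x) \<equiv> x, since some nonzero multiple of z is congruent to a multiple of x and
  J'/J is torsion-free.
*)
theory Submission
  imports Defs
begin

lemma add_group_simps [simp]:
  "carrier (add_group B) = carrier B" "monoid.mult (add_group B) = badd B"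
  "one (add_group B) = bzero B"
  by (simp_all add: add_group_def)

lemma mul_group_simps [simp]:
  "carrier (mul_group B) = carrier B" "monoid.mult (mul_group B) = bmul B"
  "one (mul_group B) = bzero B"
  by (simp_all add: mul_group_def)

locale skew_brace =
  fixes B :: "('a, 'b) brace_scheme" (structure)
  assumes is_brace: "is_brace B"
begin

sublocale A: group "add_group B" using is_brace by (simp add: is_brace_def)
sublocale M: group "mul_group B" using is_brace by (simp add: is_brace_def)

abbreviation add (infixl "\<boxplus>" 65) where "x \<boxplus> y \<equiv> badd B x y"
abbreviation mul (infixl "\<boxtimes>" 70) where "x \<boxtimes> y \<equiv> bmul B x y"
abbreviation neg where "neg x \<equiv> bneg B x"
abbreviation minv where "minv x \<equiv> inv\<^bsub>mul_group B\<^esub> x"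
abbreviation zero where "zero \<equiv> bzero B"
abbreviation lam where "lam x y \<equiv> blambda B x y"

lemma neg_eq_inv: "neg x = inv\<^bsub>add_group B\<^esub> x"
  by (simp add: bneg_def)

lemma add_closed [simp]: "x \<in> carrier B \<Longrightarrow> y \<in> carrier B \<Longrightarrow> x \<boxplus> y \<in> carrier B"
  using A.m_closed by simp
lemma mul_closed [simp]: "x \<in> carrier B \<Longrightarrow> y \<in> carrier B \<Longrightarrow> x \<boxtimes> y \<in> carrier B"
  using M.m_closed by simp
lemma zero_closed [simp]: "zero \<in> carrier B"
  using A.one_closed by simp
lemma neg_closed [simp]: "x \<in> carrier B \<Longrightarrow> neg x \<in> carrier B"
  using A.inv_closed by (simp add: neg_eq_inv)
lemma int_pow_closed [simp]: "x \<in> carrier B \<Longrightarrow> x [^]\<^bsub>add_group B\<^esub> (n::int) \<in> carrier B"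
  using A.int_pow_closed by simp
lemma minv_closed [simp]: "x \<in> carrier B \<Longrightarrow> minv x \<in> carrier B"
  using M.inv_closed by simp
lemma add_assoc:
  "x \<in> carrier B \<Longrightarrow> y \<in> carrier B \<Longrightarrow> z \<in> carrier B \<Longrightarrow> x \<boxplus> y \<boxplus> z = x \<boxplus> (y \<boxplus> z)"
  using A.m_assoc by simp
lemma mul_assoc:
  "x \<in> carrier B \<Longrightarrow> y \<in> carrier B \<Longrightarrow> z \<in> carrier B \<Longrightarrow> x \<boxtimes> y \<boxtimes> z = x \<boxtimes> (y \<boxtimes> z)"
  using M.m_assoc by simp
lemma add_zero [simp]: "x \<in> carrier B \<Longrightarrow> zero \<boxplus> x = x" "x \<in> carrier B \<Longrightarrow> x \<boxplus> zero = x"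
  using A.l_one A.r_one by simp_all
lemma mul_zero [simp]: "x \<in> carrier B \<Longrightarrow> zero \<boxtimes> x = x" "x \<in> carrier B \<Longrightarrow> x \<boxtimes> zero = x"
  using M.l_one M.r_one by simp_all
lemma add_neg [simp]: "x \<in> carrier B \<Longrightarrow> neg x \<boxplus> x = zero" "x \<in> carrier B \<Longrightarrow> x \<boxplus> neg x = zero"
  using A.l_inv A.r_inv by (simp_all add: neg_eq_inv)
lemma mul_minv [simp]: "x \<in> carrier B \<Longrightarrow> minv x \<boxtimes> x = zero" "x \<in> carrier B \<Longrightarrow> x \<boxtimes> minv x = zero"
  using M.l_inv M.r_inv by simp_all
lemma add_neg_cancel_left [simp]:
  "x \<in> carrier B \<Longrightarrow> y \<in> carrier B \<Longrightarrow> neg x \<boxplus> (x \<boxplus> y) = y"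
  "x \<in> carrier B \<Longrightarrow> y \<in> carrier B \<Longrightarrow> x \<boxplus> (neg x \<boxplus> y) = y"
  by (simp_all flip: add_assoc)
lemma mul_minv_cancel_left [simp]:
  "x \<in> carrier B \<Longrightarrow> y \<in> carrier B \<Longrightarrow> minv x \<boxtimes> (x \<boxtimes> y) = y"
  "x \<in> carrier B \<Longrightarrow> y \<in> carrier B \<Longrightarrow> x \<boxtimes> (minv x \<boxtimes> y) = y"
  by (simp_all flip: mul_assoc)
lemma add_neg_cancel_right [simp]:
  "x \<in> carrier B \<Longrightarrow> y \<in> carrier B \<Longrightarrow> y \<boxplus> x \<boxplus> neg x = y"
  "x \<in> carrier B \<Longrightarrow> y \<in> carrier B \<Longrightarrow> y \<boxplus> neg x \<boxplus> x = y"
  by (simp_all add: add_assoc)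
lemma mul_minv_cancel_right [simp]:
  "x \<in> carrier B \<Longrightarrow> y \<in> carrier B \<Longrightarrow> y \<boxtimes> x \<boxtimes> minv x = y"
  "x \<in> carrier B \<Longrightarrow> y \<in> carrier B \<Longrightarrow> y \<boxtimes> minv x \<boxtimes> x = y"
  by (simp_all add: mul_assoc)
lemma neg_neg [simp]: "x \<in> carrier B \<Longrightarrow> neg (neg x) = x"
  by (simp add: neg_eq_inv)
lemma neg_zero [simp]: "neg zero = zero"
  using A.inv_one by (simp add: neg_eq_inv)
lemma add_left_cancel:
  "x \<in> carrier B \<Longrightarrow> y \<in> carrier B \<Longrightarrow> z \<in> carrier B \<Longrightarrow> x \<boxplus> y = x \<boxplus> z \<longleftrightarrow> y = z"
  using A.l_cancel[of x y z] by auto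

lemma mul_add_distrib:
  "a \<in> carrier B \<Longrightarrow> b \<in> carrier B \<Longrightarrow> c \<in> carrier B \<Longrightarrow>
   a \<boxtimes> (b \<boxplus> c) = a \<boxtimes> b \<boxplus> neg a \<boxplus> a \<boxtimes> c"
  using is_brace by (simp add: is_brace_def)

lemma lam_eq: "lam x y = neg x \<boxplus> x \<boxtimes> y"
  by (simp add: blambda_def)
lemma lam_closed [simp]: "x \<in> carrier B \<Longrightarrow> y \<in> carrier B \<Longrightarrow> lam x y \<in> carrier B"
  by (simp add: lam_eq)
lemma mul_eq_add_lam: "x \<in> carrier B \<Longrightarrow> y \<in> carrier B \<Longrightarrow> x \<boxtimes> y = x \<boxplus> lam x y"
  by (simp add: lam_eq)
lemma lam_add:
  "x \<in> carrier B \<Longrightarrow> y \<in> carrier B \<Longrightarrow> z \<in> carrier B \<Longrightarrow> lam x (y \<boxplus> z) = lam x y \<boxplus> lam x z"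
  by (simp add: lam_eq mul_add_distrib add_assoc)

lemma lam_hom: "x \<in> carrier B \<Longrightarrow> lam x \<in> hom (add_group B) (add_group B)"
  by (auto simp: hom_def lam_add)

lemma lam_neg: "x \<in> carrier B \<Longrightarrow> y \<in> carrier B \<Longrightarrow> lam x (neg y) = neg (lam x y)"
  using group_hom.hom_inv[of "add_group B" "add_group B" "lam x" y] lam_hom
  by (simp add: group_hom_def group_hom_axioms_def A.is_group neg_eq_inv)

lemma lam_int_pow:
  "x \<in> carrier B \<Longrightarrow> y \<in> carrier B \<Longrightarrow>
   lam x (y [^]\<^bsub>add_group B\<^esub> (n::int)) = lam x y [^]\<^bsub>add_group B\<^esub> n"
  using hom_int_pow[OF lam_hom _ A.is_group A.is_group, of x y n] by simp

lemma lam_mul: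
  assumes "x \<in> carrier B" "y \<in> carrier B" "z \<in> carrier B"
  shows "lam (x \<boxtimes> y) z = lam x (lam y z)"
proof -
  have "x \<boxtimes> y \<boxplus> lam (x \<boxtimes> y) z = x \<boxtimes> y \<boxtimes> z"
    using assms by (simp add: lam_eq)
  also have "\<dots> = x \<boxtimes> (y \<boxplus> lam y z)"
    using assms by (simp add: mul_assoc mul_eq_add_lam[of y z])
  also have "\<dots> = x \<boxtimes> y \<boxplus> lam x (lam y z)"
    using assms by (simp add: mul_add_distrib add_assoc lam_eq[of x "lam y z"])
  finally show ?thesis
    using assms by (simp add: add_left_cancel)
qed

lemma lam_zero_right [simp]: "x \<in> carrier B \<Longrightarrow> lam x zero = zero"
  by (simp add: lam_eq)

lemma lam_zero_left [simp]: "y \<in> carrier B \<Longrightarrow> lam zero y = y"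
  by (simp add: lam_eq)

lemma lam_minv_self: "x \<in> carrier B \<Longrightarrow> lam (minv x) x = neg (minv x)"
  by (simp add: lam_eq)

lemma lam_minv_lam [simp]:
  "x \<in> carrier B \<Longrightarrow> y \<in> carrier B \<Longrightarrow> lam x (lam (minv x) y) = y"
  "x \<in> carrier B \<Longrightarrow> y \<in> carrier B \<Longrightarrow> lam (minv x) (lam x y) = y"
  by (simp_all flip: lam_mul)

lemma brace_idealI:
  assumes "subgroup I (add_group B)" "subgroup I (mul_group B)"
    "\<And>x h. x \<in> carrier B \<Longrightarrow> h \<in> I \<Longrightarrow> x \<boxplus> h \<boxplus> neg x \<in> I"
    "\<And>x h. x \<in> carrier B \<Longrightarrow> h \<in> I \<Longrightarrow> x \<boxtimes> h \<boxtimes> minv x \<in> I"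
    "\<And>b x. b \<in> carrier B \<Longrightarrow> x \<in> I \<Longrightarrow> lam b x \<in> I"
  shows "brace_ideal B I"
  unfolding brace_ideal_def A.normal_inv_iff M.normal_inv_iff
  using assms subgroup.subset[OF assms(1)] by (simp add: neg_eq_inv)

end

definition bcong :: "('a, 'b) brace_scheme \<Rightarrow> 'a set \<Rightarrow> 'a \<Rightarrow> 'a \<Rightarrow> bool" where
  "bcong B Z u v \<longleftrightarrow> bcoset B Z u = bcoset B Z v"

locale skew_brace_ideal = skew_brace +
  fixes Z :: "'a set"
  assumes ideal: "brace_ideal B Z"
begin

abbreviation cong_mod (infix "\<doteq>" 50) where "u \<doteq> v \<equiv> bcong B Z u v"

lemma ideal_subset: "Z \<subseteq> carrier B"
  using ideal by (simp add: brace_ideal_def)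
lemma ideal_lam_closed: "b \<in> carrier B \<Longrightarrow> x \<in> Z \<Longrightarrow> lam b x \<in> Z"
  using ideal by (simp add: brace_ideal_def)

lemma ideal_normal_add: "Z \<lhd> add_group B"
  using ideal by (simp add: brace_ideal_def)
lemma ideal_normal_mul: "Z \<lhd> mul_group B"
  using ideal by (simp add: brace_ideal_def)

sublocale NA: normal Z "add_group B" by (rule ideal_normal_add)
sublocale NM: normal Z "mul_group B" by (rule ideal_normal_mul)

lemma ideal_carrier: "x \<in> Z \<Longrightarrow> x \<in> carrier B"
  using ideal_subset by blast
lemma ideal_zero [simp]: "zero \<in> Z"
  using NA.one_closed by simp
lemma ideal_add_closed: "x \<in> Z \<Longrightarrow> y \<in> Z \<Longrightarrow> x \<boxplus> y \<in> Z"
  using NA.m_closed by simp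
lemma ideal_neg_closed: "x \<in> Z \<Longrightarrow> neg x \<in> Z"
  using NA.m_inv_closed by (simp add: neg_eq_inv)
lemma ideal_mul_closed: "x \<in> Z \<Longrightarrow> y \<in> Z \<Longrightarrow> x \<boxtimes> y \<in> Z"
  using NM.m_closed by simp
lemma ideal_add_conj_closed: "x \<in> carrier B \<Longrightarrow> h \<in> Z \<Longrightarrow> x \<boxplus> h \<boxplus> neg x \<in> Z"
  using NA.inv_op_closed2 by (simp add: neg_eq_inv)
lemma ideal_mul_conj_closed: "x \<in> carrier B \<Longrightarrow> h \<in> Z \<Longrightarrow> x \<boxtimes> h \<boxtimes> minv x \<in> Z"
  using NM.inv_op_closed2 by simp

lemma ideal_int_pow_closed: "x \<in> Z \<Longrightarrow> x [^]\<^bsub>add_group B\<^esub> (k::int) \<in> Z"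
  using A.subgroup_int_pow_closed[OF NA.subgroup_axioms] .

lemma add_diff_mem_commute:
  assumes "u \<in> carrier B" "w \<in> carrier B"
  shows "w \<boxplus> neg u \<in> Z \<longleftrightarrow> neg u \<boxplus> w \<in> Z"
proof
  assume "w \<boxplus> neg u \<in> Z"
  then have "neg u \<boxplus> (w \<boxplus> neg u) \<boxplus> neg (neg u) \<in> Z"
    using assms by (intro ideal_add_conj_closed) auto
  then show "neg u \<boxplus> w \<in> Z"
    using assms by (simp add: add_assoc)
next
  assume "neg u \<boxplus> w \<in> Z"
  then have "u \<boxplus> (neg u \<boxplus> w) \<boxplus> neg u \<in> Z"
    using assms by (intro ideal_add_conj_closed) auto
  then show "w \<boxplus> neg u \<in> Z"
    using assms by simp
qed

lemma mul_diff_mem_commute: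
  assumes "u \<in> carrier B" "w \<in> carrier B"
  shows "w \<boxtimes> minv u \<in> Z \<longleftrightarrow> minv u \<boxtimes> w \<in> Z"
proof
  assume "w \<boxtimes> minv u \<in> Z"
  then have "minv u \<boxtimes> (w \<boxtimes> minv u) \<boxtimes> minv (minv u) \<in> Z"
    using assms by (intro ideal_mul_conj_closed) auto
  then show "minv u \<boxtimes> w \<in> Z"
    using assms by (simp add: mul_assoc)
next
  assume "minv u \<boxtimes> w \<in> Z"
  then have "u \<boxtimes> (minv u \<boxtimes> w) \<boxtimes> minv u \<in> Z"
    using assms by (intro ideal_mul_conj_closed) auto
  then show "w \<boxtimes> minv u \<in> Z"
    using assms by simp
qed

text \<open>Additive and multiplicative cosets of an ideal coincide: \<open>\<lambda>\<close> of \<open>u\<inverse>\<close>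
  maps \<open>-u + w\<close> to \<open>u\<inverse>w\<close>, and \<open>Z\<close> is \<open>\<lambda>\<close>-invariant.\<close>
lemma add_diff_mem_iff_mul_diff_mem:
  assumes u: "u \<in> carrier B" and w: "w \<in> carrier B"
  shows "w \<boxplus> neg u \<in> Z \<longleftrightarrow> w \<boxtimes> minv u \<in> Z"
proof -
  have lam_diff: "lam (minv u) (neg u \<boxplus> w) = minv u \<boxtimes> w"
    using assms by (simp add: lam_add lam_neg lam_minv_self mul_eq_add_lam)
  have "neg u \<boxplus> w \<in> Z \<longleftrightarrow> minv u \<boxtimes> w \<in> Z"
  proof
    assume "neg u \<boxplus> w \<in> Z"
    then show "minv u \<boxtimes> w \<in> Z"
      using ideal_lam_closed[of "minv u"] u lam_diff by fastforce
  next
    assume "minv u \<boxtimes> w \<in> Z"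
    then have "lam u (lam (minv u) (neg u \<boxplus> w)) \<in> Z"
      using ideal_lam_closed[of u] u lam_diff by simp
    then show "neg u \<boxplus> w \<in> Z"
      using u w by simp
  qed
  then show ?thesis
    using add_diff_mem_commute[OF u w] mul_diff_mem_commute[OF u w] by blast
qed

lemma mem_bcoset_iff:
  "u \<in> carrier B \<Longrightarrow> w \<in> bcoset B Z u \<longleftrightarrow> w \<in> carrier B \<and> w \<boxplus> neg u \<in> Z"
  using NA.rcos_module[OF A.is_group, of u w] NA.elemrcos_carrier[OF A.is_group, of u w]
  by (auto simp: neg_eq_inv bcoset_def)

lemma mem_mul_rcoset_iff:
  "u \<in> carrier B \<Longrightarrow> w \<in> Z #>\<^bsub>mul_group B\<^esub> u \<longleftrightarrow> w \<in> carrier B \<and> w \<boxtimes> minv u \<in> Z"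
  using NM.rcos_module[OF M.is_group, of u w] NM.elemrcos_carrier[OF M.is_group, of u w]
  by auto

lemma mul_rcoset_eq_bcoset: "u \<in> carrier B \<Longrightarrow> Z #>\<^bsub>mul_group B\<^esub> u = bcoset B Z u"
  using mem_bcoset_iff mem_mul_rcoset_iff add_diff_mem_iff_mul_diff_mem by auto

lemma bcong_iff: "u \<in> carrier B \<Longrightarrow> v \<in> carrier B \<Longrightarrow> u \<doteq> v \<longleftrightarrow> u \<boxplus> neg v \<in> Z"
  using A.repr_independence[of u Z v] A.rcos_self[of u Z] NA.subgroup_axioms mem_bcoset_iff[of v u]
  unfolding bcong_def bcoset_def by auto

lemma bcong_refl [simp]: "u \<doteq> u"
  by (simp add: bcong_def)
lemma bcong_sym: "u \<doteq> v \<Longrightarrow> v \<doteq> u"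
  by (simp add: bcong_def)
lemma bcong_trans [trans]: "u \<doteq> v \<Longrightarrow> v \<doteq> w \<Longrightarrow> u \<doteq> w"
  by (simp add: bcong_def)
lemma eq_bcong_trans [trans]: "u = v \<Longrightarrow> v \<doteq> w \<Longrightarrow> u \<doteq> w"
  by simp
lemma bcong_eq_trans [trans]: "u \<doteq> v \<Longrightarrow> v = w \<Longrightarrow> u \<doteq> w"
  by simp

lemma bcoset_add:
  "u \<in> carrier B \<Longrightarrow> v \<in> carrier B \<Longrightarrow>
   bcoset B Z u <#>\<^bsub>add_group B\<^esub> bcoset B Z v = bcoset B Z (u \<boxplus> v)"
  using NA.rcos_sum by (simp add: bcoset_def)
lemma bcoset_mul:
  "u \<in> carrier B \<Longrightarrow> v \<in> carrier B \<Longrightarrow>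
   bcoset B Z u <#>\<^bsub>mul_group B\<^esub> bcoset B Z v = bcoset B Z (u \<boxtimes> v)"
  using NM.rcos_sum[of u v] by (simp add: mul_rcoset_eq_bcoset)
lemma bcoset_neg:
  "u \<in> carrier B \<Longrightarrow> set_inv\<^bsub>add_group B\<^esub> (bcoset B Z u) = bcoset B Z (neg u)"
  using NA.rcos_inv by (simp add: neg_eq_inv bcoset_def)

lemma bcong_add:
  "u \<in> carrier B \<Longrightarrow> v \<in> carrier B \<Longrightarrow> u' \<in> carrier B \<Longrightarrow> v' \<in> carrier B \<Longrightarrow>
   u \<doteq> v \<Longrightarrow> u' \<doteq> v' \<Longrightarrow> u \<boxplus> u' \<doteq> v \<boxplus> v'"
  unfolding bcong_def by (metis bcoset_add)
lemma bcong_mul: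
  "u \<in> carrier B \<Longrightarrow> v \<in> carrier B \<Longrightarrow> u' \<in> carrier B \<Longrightarrow> v' \<in> carrier B \<Longrightarrow>
   u \<doteq> v \<Longrightarrow> u' \<doteq> v' \<Longrightarrow> u \<boxtimes> u' \<doteq> v \<boxtimes> v'"
  unfolding bcong_def by (metis bcoset_mul)
lemma bcong_neg: "u \<in> carrier B \<Longrightarrow> v \<in> carrier B \<Longrightarrow> u \<doteq> v \<Longrightarrow> neg u \<doteq> neg v"
  unfolding bcong_def by (metis bcoset_neg)
lemma bcong_lam:
  "u \<in> carrier B \<Longrightarrow> v \<in> carrier B \<Longrightarrow> u' \<in> carrier B \<Longrightarrow> v' \<in> carrier B \<Longrightarrow>
   u \<doteq> v \<Longrightarrow> u' \<doteq> v' \<Longrightarrow> lam u u' \<doteq> lam v v'"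
  unfolding lam_eq by (intro bcong_add bcong_mul bcong_neg) auto
lemma bcong_int_pow:
  "u \<in> carrier B \<Longrightarrow> v \<in> carrier B \<Longrightarrow> u \<doteq> v \<Longrightarrow>
   u [^]\<^bsub>add_group B\<^esub> (n::int) \<doteq> v [^]\<^bsub>add_group B\<^esub> n"
  using hom_int_pow[OF NA.r_coset_hom_Mod _ A.is_group NA.factorgroup_is_group]
  by (simp add: bcong_def bcoset_def)

lemma bcong_add_left:
  "u \<in> carrier B \<Longrightarrow> u' \<in> carrier B \<Longrightarrow> v' \<in> carrier B \<Longrightarrow> u' \<doteq> v' \<Longrightarrow> u \<boxplus> u' \<doteq> u \<boxplus> v'"
  by (rule bcong_add) auto
lemma bcong_add_right:
  "u \<in> carrier B \<Longrightarrow> v \<in> carrier B \<Longrightarrow> u' \<in> carrier B \<Longrightarrow> u \<doteq> v \<Longrightarrow> u \<boxplus> u' \<doteq> v \<boxplus> u'"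
  by (rule bcong_add) auto
lemma bcong_mul_left:
  "u \<in> carrier B \<Longrightarrow> u' \<in> carrier B \<Longrightarrow> v' \<in> carrier B \<Longrightarrow> u' \<doteq> v' \<Longrightarrow> u \<boxtimes> u' \<doteq> u \<boxtimes> v'"
  by (rule bcong_mul) auto
lemma bcong_mul_right:
  "u \<in> carrier B \<Longrightarrow> v \<in> carrier B \<Longrightarrow> u' \<in> carrier B \<Longrightarrow> u \<doteq> v \<Longrightarrow> u \<boxtimes> u' \<doteq> v \<boxtimes> u'"
  by (rule bcong_mul) auto
lemma bcong_add_left_cancel:
  "u \<in> carrier B \<Longrightarrow> u' \<in> carrier B \<Longrightarrow> v' \<in> carrier B \<Longrightarrow> u \<boxplus> u' \<doteq> u \<boxplus> v' \<Longrightarrow> u' \<doteq> v'"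
  using bcong_add_left[of "neg u" "u \<boxplus> u'" "u \<boxplus> v'"] by simp
lemma bcong_mul_left_cancel:
  "u \<in> carrier B \<Longrightarrow> u' \<in> carrier B \<Longrightarrow> v' \<in> carrier B \<Longrightarrow> u \<boxtimes> u' \<doteq> u \<boxtimes> v' \<Longrightarrow> u' \<doteq> v'"
  using bcong_mul_left[of "minv u" "u \<boxtimes> u'" "u \<boxtimes> v'"] by simp

lemma ideal_bcong_zero: "z \<in> Z \<Longrightarrow> z \<doteq> zero"
  using bcong_iff[of z zero] ideal_carrier by simp

lemma quot_brace_carrier: "carrier (quot_brace B Z) = bcoset B Z ` carrier B"
  by (auto simp: quot_brace_def RCOSETS_def bcoset_def)
lemma quot_brace_add:
  "u \<in> carrier B \<Longrightarrow> v \<in> carrier B \<Longrightarrow>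
   badd (quot_brace B Z) (bcoset B Z u) (bcoset B Z v) = bcoset B Z (u \<boxplus> v)"
  by (simp add: quot_brace_def bcoset_add)
lemma quot_brace_mul:
  "u \<in> carrier B \<Longrightarrow> v \<in> carrier B \<Longrightarrow>
   bmul (quot_brace B Z) (bcoset B Z u) (bcoset B Z v) = bcoset B Z (u \<boxtimes> v)"
  by (simp add: quot_brace_def bcoset_mul)
lemma quot_brace_neg:
  assumes "u \<in> carrier B"
  shows "bneg (quot_brace B Z) (bcoset B Z u) = bcoset B Z (neg u)"
proof -
  have "add_group (quot_brace B Z) = add_group B Mod Z"
    by (simp add: add_group_def quot_brace_def FactGroup_def)
  moreover have "bcoset B Z u \<in> carrier (add_group B Mod Z)"
    using assms by (auto simp: FactGroup_def RCOSETS_def bcoset_def)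
  ultimately show ?thesis
    using assms NA.inv_FactGroup bcoset_neg by (simp add: bneg_def bcoset_def)
qed
lemma quot_brace_lam:
  "u \<in> carrier B \<Longrightarrow> v \<in> carrier B \<Longrightarrow>
   blambda (quot_brace B Z) (bcoset B Z u) (bcoset B Z v) = bcoset B Z (lam u v)"
  by (simp add: blambda_def quot_brace_neg quot_brace_mul quot_brace_add lam_eq)

lemma Soc_mod_iff:
  "x \<in> Soc_mod B Z \<longleftrightarrow> x \<in> carrier B \<and> (\<forall>y\<in>carrier B. lam x y \<doteq> y \<and> x \<boxplus> y \<doteq> y \<boxplus> x)"
  by (auto simp: Soc_mod_def Soc_def quot_brace_carrier quot_brace_lam quot_brace_add bcong_def)

lemma zeta_mod_iff:
  "x \<in> zeta_mod B Z \<longleftrightarrow> x \<in> Soc_mod B Z \<and> (\<forall>y\<in>carrier B. x \<boxtimes> y \<doteq> y \<boxtimes> x)"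
  by (auto simp: Soc_mod_def zeta_mod_def zeta_def Soc_def quot_brace_carrier quot_brace_mul bcong_def)

lemma zeta_mod_iff_lam:
  "x \<in> zeta_mod B Z \<longleftrightarrow> x \<in> carrier B \<and>
     (\<forall>y\<in>carrier B. lam x y \<doteq> y \<and> x \<boxplus> y \<doteq> y \<boxplus> x \<and> x \<boxtimes> y \<doteq> y \<boxtimes> x)"
  unfolding zeta_mod_iff Soc_mod_iff by auto

lemma lam_bcong_iff_mul_bcong_add:
  "x \<in> carrier B \<Longrightarrow> y \<in> carrier B \<Longrightarrow> lam x y \<doteq> y \<longleftrightarrow> x \<boxtimes> y \<doteq> x \<boxplus> y"
  using bcong_add_left[of x "lam x y" y] bcong_add_left_cancel[of x "lam x y" y]
  by (auto simp: mul_eq_add_lam)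

lemma bcong_mul_commute:
  assumes x: "x \<in> carrier B" and y: "y \<in> carrier B"
    and "lam x y \<doteq> y" "lam y x \<doteq> x" "x \<boxplus> y \<doteq> y \<boxplus> x"
  shows "x \<boxtimes> y \<doteq> y \<boxtimes> x"
proof -
  have "x \<boxtimes> y \<doteq> x \<boxplus> y" using assms lam_bcong_iff_mul_bcong_add by blast
  also have "\<dots> \<doteq> y \<boxplus> x" by fact
  also have "\<dots> \<doteq> y \<boxtimes> x" using assms lam_bcong_iff_mul_bcong_add bcong_sym by blast
  finally show ?thesis .
qed

lemma zeta_mod_iff_mul:
  "x \<in> zeta_mod B Z \<longleftrightarrow> x \<in> carrier B \<and>
     (\<forall>y\<in>carrier B. x \<boxtimes> y \<doteq> x \<boxplus> y \<and> x \<boxplus> y \<doteq> y \<boxplus> x \<and> x \<boxtimes> y \<doteq> y \<boxtimes> x)"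
  unfolding zeta_mod_iff_lam using lam_bcong_iff_mul_bcong_add by auto

lemma zeta_mod_subset: "zeta_mod B Z \<subseteq> carrier B"
  by (auto simp: zeta_mod_def)

lemma zeta_modD:
  assumes "x \<in> zeta_mod B Z" "y \<in> carrier B"
  shows "x \<boxtimes> y \<doteq> x \<boxplus> y" "x \<boxplus> y \<doteq> x \<boxtimes> y" "x \<boxplus> y \<doteq> y \<boxplus> x"
    "y \<boxplus> x \<doteq> x \<boxplus> y" "x \<boxtimes> y \<doteq> y \<boxtimes> x" "y \<boxtimes> x \<doteq> x \<boxtimes> y"
  using assms bcong_sym unfolding zeta_mod_iff_mul by blast+

lemma zeta_mod_bcong_closed:
  assumes a: "a \<in> zeta_mod B Z" and b: "b \<in> carrier B" and ba: "b \<doteq> a"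
  shows "b \<in> zeta_mod B Z"
  unfolding zeta_mod_iff_mul
proof (intro conjI ballI)
  have aB: "a \<in> carrier B" using a zeta_mod_subset by blast
  fix y assume y: "y \<in> carrier B"
  have "b \<boxtimes> y \<doteq> a \<boxtimes> y" using ba aB b y by (intro bcong_mul_right)
  also have "\<dots> \<doteq> a \<boxplus> y" using zeta_modD(1)[OF a y] .
  also have "\<dots> \<doteq> b \<boxplus> y" using bcong_sym[OF ba] aB b y by (intro bcong_add_right)
  finally show "b \<boxtimes> y \<doteq> b \<boxplus> y" .
  have "b \<boxplus> y \<doteq> a \<boxplus> y" using ba aB b y by (intro bcong_add_right)
  also have "\<dots> \<doteq> y \<boxplus> a" using zeta_modD(3)[OF a y] .
  also have "\<dots> \<doteq> y \<boxplus> b" using bcong_sym[OF ba] aB b y by (intro bcong_add_left)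
  finally show "b \<boxplus> y \<doteq> y \<boxplus> b" .
  have "b \<boxtimes> y \<doteq> a \<boxtimes> y" using ba aB b y by (intro bcong_mul_right)
  also have "\<dots> \<doteq> y \<boxtimes> a" using zeta_modD(5)[OF a y] .
  also have "\<dots> \<doteq> y \<boxtimes> b" using bcong_sym[OF ba] aB b y by (intro bcong_mul_left)
  finally show "b \<boxtimes> y \<doteq> y \<boxtimes> b" .
qed (fact b)

lemma zeta_mod_mul_closed:
  assumes a: "a \<in> zeta_mod B Z" and b: "b \<in> zeta_mod B Z"
  shows "a \<boxtimes> b \<in> zeta_mod B Z"
  unfolding zeta_mod_iff_mul
proof (intro conjI ballI)
  have aB: "a \<in> carrier B" and bB: "b \<in> carrier B" using a b zeta_mod_subset by auto
  then show "a \<boxtimes> b \<in> carrier B" by simp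
  fix y assume y: "y \<in> carrier B"
  have "a \<boxtimes> b \<boxtimes> y = a \<boxtimes> (b \<boxtimes> y)" using aB bB y by (simp add: mul_assoc)
  also have "\<dots> \<doteq> a \<boxplus> (b \<boxtimes> y)" using zeta_modD(1)[OF a] bB y by simp
  also have "\<dots> \<doteq> a \<boxplus> (b \<boxplus> y)" using zeta_modD(1)[OF b y] aB bB y by (intro bcong_add_left) auto
  also have "\<dots> = a \<boxplus> b \<boxplus> y" using aB bB y by (simp add: add_assoc)
  also have "\<dots> \<doteq> a \<boxtimes> b \<boxplus> y" using zeta_modD(2)[OF a bB] aB bB y by (intro bcong_add_right) auto
  finally show "a \<boxtimes> b \<boxtimes> y \<doteq> a \<boxtimes> b \<boxplus> y" .
  have "a \<boxtimes> b \<boxplus> y \<doteq> a \<boxplus> b \<boxplus> y" using zeta_modD(1)[OF a bB] aB bB y by (intro bcong_add_right) auto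
  also have "\<dots> = a \<boxplus> (b \<boxplus> y)" using aB bB y by (simp add: add_assoc)
  also have "\<dots> \<doteq> a \<boxplus> (y \<boxplus> b)" using zeta_modD(3)[OF b y] aB bB y by (intro bcong_add_left) auto
  also have "\<dots> = a \<boxplus> y \<boxplus> b" using aB bB y by (simp add: add_assoc)
  also have "\<dots> \<doteq> y \<boxplus> a \<boxplus> b" using zeta_modD(3)[OF a y] aB bB y by (intro bcong_add_right) auto
  also have "\<dots> = y \<boxplus> (a \<boxplus> b)" using aB bB y by (simp add: add_assoc)
  also have "\<dots> \<doteq> y \<boxplus> (a \<boxtimes> b)" using zeta_modD(2)[OF a bB] aB bB y by (intro bcong_add_left) auto
  finally show "a \<boxtimes> b \<boxplus> y \<doteq> y \<boxplus> a \<boxtimes> b" .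
  have "a \<boxtimes> b \<boxtimes> y = a \<boxtimes> (b \<boxtimes> y)" using aB bB y by (simp add: mul_assoc)
  also have "\<dots> \<doteq> a \<boxtimes> (y \<boxtimes> b)" using zeta_modD(5)[OF b y] aB bB y by (intro bcong_mul_left) auto
  also have "\<dots> = a \<boxtimes> y \<boxtimes> b" using aB bB y by (simp add: mul_assoc)
  also have "\<dots> \<doteq> y \<boxtimes> a \<boxtimes> b" using zeta_modD(5)[OF a y] aB bB y by (intro bcong_mul_right) auto
  also have "\<dots> = y \<boxtimes> (a \<boxtimes> b)" using aB bB y by (simp add: mul_assoc)
  finally show "a \<boxtimes> b \<boxtimes> y \<doteq> y \<boxtimes> (a \<boxtimes> b)" .
qed

lemma zeta_mod_add_closed:
  assumes a: "a \<in> zeta_mod B Z" and b: "b \<in> zeta_mod B Z"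
  shows "a \<boxplus> b \<in> zeta_mod B Z"
proof -
  have "a \<in> carrier B" "b \<in> carrier B" using a b zeta_mod_subset by auto
  then show ?thesis
    using zeta_mod_bcong_closed[OF zeta_mod_mul_closed[OF a b] _ zeta_modD(2)[OF a]] by simp
qed

lemma zeta_mod_zero: "zero \<in> zeta_mod B Z"
  by (simp add: zeta_mod_iff_mul)

lemma zeta_mod_add_minv_bcong_zero:
  assumes a: "a \<in> zeta_mod B Z"
  shows "a \<boxplus> minv a \<doteq> zero"
proof -
  have aB: "a \<in> carrier B" using a zeta_mod_subset by blast
  have "a \<boxplus> minv a \<doteq> a \<boxtimes> minv a" using zeta_modD(2)[OF a minv_closed[OF aB]] .
  then show ?thesis using aB by simp
qed

lemma zeta_mod_minv_bcong_neg:
  assumes a: "a \<in> zeta_mod B Z"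
  shows "minv a \<doteq> neg a"
proof -
  have aB: "a \<in> carrier B" using a zeta_mod_subset by blast
  have "minv a = neg a \<boxplus> (a \<boxplus> minv a)" using aB by simp
  also have "\<dots> \<doteq> neg a \<boxplus> zero"
    using zeta_mod_add_minv_bcong_zero[OF a] aB by (intro bcong_add_left) auto
  finally show ?thesis using aB by simp
qed

lemma zeta_mod_minv_closed:
  assumes a: "a \<in> zeta_mod B Z"
  shows "minv a \<in> zeta_mod B Z"
  unfolding zeta_mod_iff_mul
proof (intro conjI ballI)
  have aB: "a \<in> carrier B" using a zeta_mod_subset by blast
  then show "minv a \<in> carrier B" by simp
  have sum: "a \<boxplus> minv a \<doteq> zero" by (rule zeta_mod_add_minv_bcong_zero[OF a])
  have mn: "minv a \<doteq> neg a" by (rule zeta_mod_minv_bcong_neg[OF a])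
  fix y assume y: "y \<in> carrier B"
  have "a \<boxtimes> (minv a \<boxtimes> y) = zero \<boxplus> y" using aB y by simp
  also have "\<dots> \<doteq> a \<boxplus> minv a \<boxplus> y" using bcong_sym[OF sum] aB y by (intro bcong_add_right) auto
  also have "\<dots> = a \<boxplus> (minv a \<boxplus> y)" using aB y by (simp add: add_assoc)
  also have "\<dots> \<doteq> a \<boxtimes> (minv a \<boxplus> y)" using zeta_modD(2)[OF a, of "minv a \<boxplus> y"] aB y by simp
  finally show "minv a \<boxtimes> y \<doteq> minv a \<boxplus> y"
    using bcong_mul_left_cancel[of a "minv a \<boxtimes> y" "minv a \<boxplus> y"] aB y by simp
  have "minv a \<boxplus> y \<doteq> neg a \<boxplus> y" using mn aB y by (intro bcong_add_right) auto
  also have "\<dots> = neg a \<boxplus> (y \<boxplus> a) \<boxplus> neg a" using aB y by (simp add: add_assoc)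
  also have "\<dots> \<doteq> neg a \<boxplus> (a \<boxplus> y) \<boxplus> neg a"
    using zeta_modD(4)[OF a y] aB y by (intro bcong_add_right bcong_add_left) auto
  also have "\<dots> = y \<boxplus> neg a" using aB y by simp
  also have "\<dots> \<doteq> y \<boxplus> minv a" using bcong_sym[OF mn] aB y by (intro bcong_add_left) auto
  finally show "minv a \<boxplus> y \<doteq> y \<boxplus> minv a" .
  have "minv a \<boxtimes> y = minv a \<boxtimes> (y \<boxtimes> a \<boxtimes> minv a)" using aB y by simp
  also have "\<dots> \<doteq> minv a \<boxtimes> (a \<boxtimes> y \<boxtimes> minv a)"
    using zeta_modD(6)[OF a y] aB y by (intro bcong_mul_right bcong_mul_left) auto
  also have "\<dots> = y \<boxtimes> minv a" using aB y by (simp add: mul_assoc)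
  finally show "minv a \<boxtimes> y \<doteq> y \<boxtimes> minv a" .
qed

lemma zeta_mod_neg_closed:
  assumes a: "a \<in> zeta_mod B Z"
  shows "neg a \<in> zeta_mod B Z"
proof -
  have "a \<in> carrier B" using a zeta_mod_subset by blast
  then show ?thesis
    using zeta_mod_bcong_closed[OF zeta_mod_minv_closed[OF a] _ bcong_sym[OF zeta_mod_minv_bcong_neg[OF a]]]
    by simp
qed

lemma zeta_mod_add_conj_closed:
  assumes a: "a \<in> zeta_mod B Z" and x: "x \<in> carrier B"
  shows "x \<boxplus> a \<boxplus> neg x \<in> zeta_mod B Z"
proof -
  have aB: "a \<in> carrier B" using a zeta_mod_subset by blast
  have "x \<boxplus> a \<boxplus> neg x \<doteq> a \<boxplus> x \<boxplus> neg x" using zeta_modD(4)[OF a x] aB x by (intro bcong_add_right) auto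
  then show ?thesis using zeta_mod_bcong_closed[OF a] aB x by simp
qed

lemma zeta_mod_mul_conj_closed:
  assumes a: "a \<in> zeta_mod B Z" and x: "x \<in> carrier B"
  shows "x \<boxtimes> a \<boxtimes> minv x \<in> zeta_mod B Z"
proof -
  have aB: "a \<in> carrier B" using a zeta_mod_subset by blast
  have "x \<boxtimes> a \<boxtimes> minv x \<doteq> a \<boxtimes> x \<boxtimes> minv x" using zeta_modD(6)[OF a x] aB x by (intro bcong_mul_right) auto
  then show ?thesis using zeta_mod_bcong_closed[OF a] aB x by simp
qed

lemma zeta_mod_lam_bcong:
  assumes a: "a \<in> zeta_mod B Z" and y: "y \<in> carrier B"
  shows "lam y a \<doteq> a"
proof -
  have aB: "a \<in> carrier B" using a zeta_mod_subset by blast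
  have "y \<boxplus> lam y a = y \<boxtimes> a" using aB y by (simp add: mul_eq_add_lam)
  also have "\<dots> \<doteq> a \<boxtimes> y" using zeta_modD(6)[OF a y] .
  also have "\<dots> \<doteq> a \<boxplus> y" using zeta_modD(1)[OF a y] .
  also have "\<dots> \<doteq> y \<boxplus> a" using zeta_modD(3)[OF a y] .
  finally show ?thesis using bcong_add_left_cancel[of y "lam y a" a] aB y by simp
qed

lemma zeta_mod_lam_closed:
  assumes a: "a \<in> zeta_mod B Z" and y: "y \<in> carrier B"
  shows "lam y a \<in> zeta_mod B Z"
proof -
  have "a \<in> carrier B" using a zeta_mod_subset by blast
  then show ?thesis using zeta_mod_bcong_closed[OF a _ zeta_mod_lam_bcong[OF a y]] y by simp
qed

lemma ideal_subset_zeta_mod: "Z \<subseteq> zeta_mod B Z"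
  using zeta_mod_bcong_closed[OF zeta_mod_zero ideal_carrier ideal_bcong_zero] by blast

lemma ideal_zeta_mod: "brace_ideal B (zeta_mod B Z)"
proof (rule brace_idealI)
  show "subgroup (zeta_mod B Z) (add_group B)"
  proof (rule A.subgroupI)
    fix a assume "a \<in> zeta_mod B Z"
    then show "inv\<^bsub>add_group B\<^esub> a \<in> zeta_mod B Z"
      using zeta_mod_neg_closed by (simp add: neg_eq_inv)
  qed (use zeta_mod_subset zeta_mod_zero zeta_mod_add_closed in auto)
  show "subgroup (zeta_mod B Z) (mul_group B)"
  proof (rule M.subgroupI)
    fix a assume "a \<in> zeta_mod B Z"
    then show "inv\<^bsub>mul_group B\<^esub> a \<in> zeta_mod B Z"
      using zeta_mod_minv_closed by simp
  qed (use zeta_mod_subset zeta_mod_zero zeta_mod_mul_closed in auto)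
qed (simp_all add: zeta_mod_add_conj_closed zeta_mod_mul_conj_closed zeta_mod_lam_closed)

end

context skew_brace
begin

lemma brace_ideal_Int:
  assumes I: "brace_ideal B I" and J: "brace_ideal B J"
  shows "brace_ideal B (I \<inter> J)"
proof -
  interpret I: skew_brace_ideal B I by unfold_locales (rule I)
  interpret J: skew_brace_ideal B J by unfold_locales (rule J)
  show ?thesis
  proof (rule brace_idealI)
    show "subgroup (I \<inter> J) (add_group B)"
      by (rule A.subgroups_Inter_pair[OF I.NA.subgroup_axioms J.NA.subgroup_axioms])
    show "subgroup (I \<inter> J) (mul_group B)"
      by (rule M.subgroups_Inter_pair[OF I.NM.subgroup_axioms J.NM.subgroup_axioms])
  qed (simp_all add: I.ideal_add_conj_closed J.ideal_add_conj_closed I.ideal_mul_conj_closed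
      J.ideal_mul_conj_closed I.ideal_lam_closed J.ideal_lam_closed)
qed

lemma brace_ideal_zero: "brace_ideal B {zero}"
  using A.one_is_normal M.one_is_normal by (simp add: brace_ideal_def)

lemma brace_ideal_upper_zeta: "brace_ideal B (upper_zeta B k)"
proof (induction k)
  case 0
  then show ?case using brace_ideal_zero by simp
next
  case (Suc k)
  interpret skew_brace_ideal B "upper_zeta B k" by unfold_locales (rule Suc.IH)
  show ?case using ideal_zeta_mod by simp
qed

lemma bcong_Int_iff:
  assumes I: "brace_ideal B I" and J: "brace_ideal B J"
    and u: "u \<in> carrier B" and v: "v \<in> carrier B"
  shows "bcong B (I \<inter> J) u v \<longleftrightarrow> bcong B I u v \<and> bcong B J u v"
proof -
  interpret I: skew_brace_ideal B I by unfold_locales (rule I)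
  interpret J: skew_brace_ideal B J by unfold_locales (rule J)
  interpret IJ: skew_brace_ideal B "I \<inter> J" by unfold_locales (rule brace_ideal_Int[OF I J])
  show ?thesis using I.bcong_iff[OF u v] J.bcong_iff[OF u v] IJ.bcong_iff[OF u v] by simp
qed

lemma bcong_Int_iff_of_mem:
  assumes I: "brace_ideal B I" and J: "brace_ideal B J" and u: "u \<in> I" and v: "v \<in> I"
  shows "bcong B (I \<inter> J) u v \<longleftrightarrow> bcong B J u v"
proof -
  interpret I: skew_brace_ideal B I by unfold_locales (rule I)
  have "u \<boxplus> neg v \<in> I" using I.ideal_add_closed[OF u I.ideal_neg_closed[OF v]] .
  then have "bcong B I u v" using I.bcong_iff I.ideal_carrier u v by simp
  then show ?thesis using bcong_Int_iff[OF I J] I.ideal_carrier u v by simp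
qed

lemma bcong_mono:
  assumes I: "brace_ideal B I" and J: "brace_ideal B J" and "I \<subseteq> J"
    and u: "u \<in> carrier B" and v: "v \<in> carrier B" and "bcong B I u v"
  shows "bcong B J u v"
proof -
  interpret I: skew_brace_ideal B I by unfold_locales (rule I)
  interpret J: skew_brace_ideal B J by unfold_locales (rule J)
  show ?thesis using assms I.bcong_iff[OF u v] J.bcong_iff[OF u v] by auto
qed

lemma zeta_mod_mono:
  assumes I: "brace_ideal B I" and J: "brace_ideal B J" and "I \<subseteq> J"
  shows "zeta_mod B I \<subseteq> zeta_mod B J"
proof -
  interpret I: skew_brace_ideal B I by unfold_locales (rule I)
  interpret J: skew_brace_ideal B J by unfold_locales (rule J)
  have "bcong B I u v \<Longrightarrow> bcong B J u v" if "u \<in> carrier B" "v \<in> carrier B" for u v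
    using bcong_mono[OF I J \<open>I \<subseteq> J\<close> that] .
  then show ?thesis by (auto simp: I.zeta_mod_iff_lam J.zeta_mod_iff_lam)
qed

lemma zeta_mod_Int:
  assumes I: "brace_ideal B I" and J: "brace_ideal B J"
    and "x \<in> zeta_mod B I" and "x \<in> zeta_mod B J"
  shows "x \<in> zeta_mod B (I \<inter> J)"
proof -
  interpret I: skew_brace_ideal B I by unfold_locales (rule I)
  interpret J: skew_brace_ideal B J by unfold_locales (rule J)
  interpret IJ: skew_brace_ideal B "I \<inter> J" by unfold_locales (rule brace_ideal_Int[OF I J])
  show ?thesis using assms bcong_Int_iff[OF I J]
    unfolding I.zeta_mod_iff_lam J.zeta_mod_iff_lam IJ.zeta_mod_iff_lam by auto
qed

text \<open>If \<open>\<zeta>\<^sub>j\<^sub>+\<^sub>1\<close> is the first term of the upper central series not meeting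
  \<open>L\<close> inside \<open>K\<close>, then any \<open>x \<in> \<zeta>\<^sub>j\<^sub>+\<^sub>1 \<inter> L - K\<close> is central modulo
  \<open>\<zeta>\<^sub>j\<close> and modulo \<open>L\<close>, hence modulo \<open>\<zeta>\<^sub>j \<inter> L \<subseteq> K\<close>.\<close>
lemma zeta_mod_meets_ideal:
  assumes nilp: "upper_zeta B m = carrier B"
    and K: "brace_ideal B K" and L: "brace_ideal B L" and LK: "\<not> L \<subseteq> K"
  shows "\<exists>x \<in> L - K. x \<in> zeta_mod B K"
proof -
  define P where "P k \<longleftrightarrow> \<not> upper_zeta B k \<inter> L \<subseteq> K" for k
  have "P m" using nilp LK L by (auto simp: P_def brace_ideal_def)
  then obtain k where Pk: "P k" and least: "\<And>j. j < k \<Longrightarrow> \<not> P j"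
    using exists_least_iff[of P] by blast
  interpret K: skew_brace_ideal B K by unfold_locales (rule K)
  interpret L: skew_brace_ideal B L by unfold_locales (rule L)
  have "k \<noteq> 0" using Pk by (auto simp: P_def)
  then obtain j where k: "k = Suc j" using not0_implies_Suc by blast
  have ZL: "upper_zeta B j \<inter> L \<subseteq> K" using least[of j] k by (simp add: P_def)
  obtain x where x: "x \<in> zeta_mod B (upper_zeta B j)" "x \<in> L" "x \<notin> K"
    using Pk k by (auto simp: P_def)
  have "x \<in> zeta_mod B (upper_zeta B j \<inter> L)"
    using zeta_mod_Int[OF brace_ideal_upper_zeta L x(1)] L.ideal_subset_zeta_mod x(2) by blast
  then have "x \<in> zeta_mod B K"
    using zeta_mod_mono[OF brace_ideal_Int[OF brace_ideal_upper_zeta L] K ZL] by blast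
  then show ?thesis using x by blast
qed

end

lemma sub_brace_simps [simp]:
  "carrier (sub_brace B I) = I" "badd (sub_brace B I) = badd B"
  "bmul (sub_brace B I) = bmul B" "bzero (sub_brace B I) = bzero B"
  by (simp_all add: sub_brace_def)

lemma add_group_sub_brace: "add_group (sub_brace B I) = (add_group B)\<lparr>carrier := I\<rparr>"
  by (simp add: add_group_def sub_brace_def)

lemma mul_group_sub_brace: "mul_group (sub_brace B I) = (mul_group B)\<lparr>carrier := I\<rparr>"
  by (simp add: mul_group_def sub_brace_def)

lemma bcong_sub_brace: "bcong (sub_brace B I) = bcong B"
  by (simp add: bcong_def bcoset_def add_group_def sub_brace_def r_coset_def fun_eq_iff)

context skew_brace_ideal
begin

lemma sub_brace_neg: "a \<in> Z \<Longrightarrow> bneg (sub_brace B Z) a = neg a"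
  by (simp add: bneg_def add_group_sub_brace NA.subgroup_axioms)

lemma sub_brace_lam: "a \<in> Z \<Longrightarrow> blambda (sub_brace B Z) a b = lam a b"
  by (simp add: blambda_def sub_brace_neg)

lemma sub_brace_int_pow:
  "x \<in> Z \<Longrightarrow> x [^]\<^bsub>add_group (sub_brace B Z)\<^esub> (k::int) = x [^]\<^bsub>add_group B\<^esub> k"
  using A.int_pow_consistent[OF NA.subgroup_axioms] by (simp add: add_group_sub_brace)

lemma is_brace_sub_brace: "is_brace (sub_brace B Z)"
  unfolding is_brace_def
proof (intro conjI ballI)
  show "group (add_group (sub_brace B Z))"
    unfolding add_group_sub_brace by (rule A.subgroup_imp_group[OF NA.subgroup_axioms])
  show "group (mul_group (sub_brace B Z))"
    unfolding mul_group_sub_brace by (rule M.subgroup_imp_group[OF NM.subgroup_axioms])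
  fix a b c
  assume "a \<in> carrier (sub_brace B Z)" "b \<in> carrier (sub_brace B Z)" "c \<in> carrier (sub_brace B Z)"
  then show "bmul (sub_brace B Z) a (badd (sub_brace B Z) b c) =
      badd (sub_brace B Z) (badd (sub_brace B Z) (bmul (sub_brace B Z) a b) (bneg (sub_brace B Z) a))
        (bmul (sub_brace B Z) a c)"
    using mul_add_distrib ideal_carrier by (simp add: sub_brace_neg)
qed

lemma brace_ideal_sub_brace:
  assumes K: "brace_ideal B K" and KZ: "K \<subseteq> Z"
  shows "brace_ideal (sub_brace B Z) K"
proof -
  interpret K: skew_brace_ideal B K by unfold_locales (rule K)
  have "K \<lhd> add_group (sub_brace B Z)"
    unfolding add_group_sub_brace by (rule A.normal_restrict_supergroup[OF NA.subgroup_axioms K.ideal_normal_add KZ])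
  moreover have "K \<lhd> mul_group (sub_brace B Z)"
    unfolding mul_group_sub_brace by (rule M.normal_restrict_supergroup[OF NM.subgroup_axioms K.ideal_normal_mul KZ])
  ultimately show ?thesis
    unfolding brace_ideal_def using KZ K.ideal_lam_closed ideal_carrier K.ideal_carrier
    by (auto simp: sub_brace_lam subsetD)
qed

lemma zeta_mod_sub_brace_iff:
  assumes K: "brace_ideal (sub_brace B Z) K"
  shows "x \<in> zeta_mod (sub_brace B Z) K \<longleftrightarrow> x \<in> Z \<and>
    (\<forall>y\<in>Z. bcong B K (lam x y) y \<and> bcong B K (x \<boxplus> y) (y \<boxplus> x) \<and> bcong B K (x \<boxtimes> y) (y \<boxtimes> x))"
proof -
  interpret C: skew_brace_ideal "sub_brace B Z" K
    by unfold_locales (simp_all add: is_brace_sub_brace K)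
  show ?thesis unfolding C.zeta_mod_iff_lam by (auto simp: bcong_sub_brace sub_brace_lam)
qed

end

lemma (in group) prime_order_pow_generates:
  assumes p: "Factorial_Ring.prime (order G)" and x: "x \<in> carrier G" "x \<noteq> \<one>"
    and y: "y \<in> carrier G"
  shows "\<exists>k::int. y = x [^] k"
proof -
  have fin: "finite (carrier G)" using p unfolding order_def by (metis card.infinite not_prime_0)
  have "ord x dvd order G" using ord_dvd_group_order[OF x(1)] .
  moreover have "ord x \<noteq> 1" using ord_eq_1[OF x(1)] x(2) by simp
  ultimately have "ord x = order G" using p unfolding prime_nat_iff by blast
  then have "card (generate G {x}) = card (carrier G)"
    using generate_pow_card[OF x(1)] by (simp add: order_def)
  then have "generate G {x} = carrier G"
    using card_subset_eq[OF fin generate_incl] x(1) by simp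
  then show ?thesis using generate_pow[OF x(1)] y by auto
qed

lemma (in group) cyclic_group_pow_commensurable:
  assumes "cyclic_group G" and x: "x \<in> carrier G" "x \<noteq> \<one>" and y: "y \<in> carrier G"
  shows "\<exists>(a::int) (b::int). a \<noteq> 0 \<and> y [^] a = x [^] b"
proof -
  obtain g where g: "g \<in> carrier G" and gen: "carrier G = range (\<lambda>n::int. g [^] n)"
    using assms(1) cyclic_group by blast
  obtain a :: int where a: "x = g [^] a" using x(1) gen by auto
  obtain b :: int where b: "y = g [^] b" using y gen by auto
  have "a \<noteq> 0" using a x(2) by auto
  moreover have "y [^] a = x [^] b"
  proof -
    have "y [^] a = g [^] (b * a)" by (simp add: b int_pow_pow g)
    also have "\<dots> = x [^] b" by (simp add: a int_pow_pow g mult.commute)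
    finally show ?thesis .
  qed
  ultimately show ?thesis by blast
qed

lemma (in group) infinite_cyclic_group_pow_inj:
  assumes "cyclic_group G" "infinite (carrier G)" and x: "x \<in> carrier G" and y: "y \<in> carrier G"
    and "a \<noteq> 0" and xy: "x [^] a = y [^] (a::int)"
  shows "x = y"
proof -
  obtain g where g: "g \<in> carrier G" and gen: "carrier G = range (\<lambda>n::int. g [^] n)"
    using assms(1) cyclic_group by blast
  have "carrier (subgroup_generated G {g}) = carrier G"
    using carrier_subgroup_generated_by_singleton[OF g] gen by simp
  then have inj: "\<forall>i j::int. g [^] i = g [^] j \<longrightarrow> i = j"
    using infinite_cyclic_subgroup_int[OF g] assms(2) by simp
  obtain i :: int where i: "x = g [^] i" using x gen by auto
  obtain j :: int where j: "y = g [^] j" using y gen by auto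
  have "g [^] (i * a) = g [^] (j * a)" using xy by (simp add: i j int_pow_pow g)
  then have "i * a = j * a" using inj by blast
  then have "i = j" using \<open>a \<noteq> 0\<close> by simp
  then show ?thesis using i j by simp
qed

lemma add_group_factor: "add_group (factor B J' J) = (add_group B)\<lparr>carrier := J'\<rparr> Mod J"
  by (simp add: factor_def add_group_def quot_brace_def FactGroup_def sub_brace_def)

context skew_brace
begin

context
  fixes J J' :: "'a set"
  assumes J: "brace_ideal B J" and J': "brace_ideal B J'" and JJ': "J \<subseteq> J'"
begin

interpretation J: skew_brace_ideal B J by unfold_locales (rule J)
interpretation J': skew_brace_ideal B J' by unfold_locales (rule J')

private abbreviation "A' \<equiv> (add_group B)\<lparr>carrier := J'\<rparr>"

private lemma group_A': "group A'"
  using A.subgroup_imp_group[OF J'.NA.subgroup_axioms] by simp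

private lemma normal_factor: "J \<lhd> A'"
  using A.normal_restrict_supergroup[OF J'.NA.subgroup_axioms J.ideal_normal_add JJ'] by simp

lemma group_factor: "group (add_group (factor B J' J))"
  unfolding add_group_factor by (rule normal.factorgroup_is_group[OF normal_factor])

lemma bcoset_hom_factor: "bcoset B J \<in> hom A' (add_group (factor B J' J))"
proof -
  have "bcoset B J = (\<lambda>a. J #>\<^bsub>A'\<^esub> a)"
    by (simp add: fun_eq_iff bcoset_def r_coset_def)
  then show ?thesis
    using normal.r_coset_hom_Mod[OF normal_factor] by (simp add: add_group_factor)
qed

lemma carrier_factor_eq: "carrier (add_group (factor B J' J)) = bcoset B J ` J'"
  using carrier_FactGroup[of A' J] by (simp add: add_group_factor bcoset_def r_coset_def)

lemma bcoset_int_pow: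
  assumes "u \<in> J'"
  shows "bcoset B J (u [^]\<^bsub>add_group B\<^esub> (n::int)) = bcoset B J u [^]\<^bsub>add_group (factor B J' J)\<^esub> n"
  using hom_int_pow[OF bcoset_hom_factor _ group_A' group_factor, of u n] assms
    A.int_pow_consistent[OF J'.NA.subgroup_axioms assms, of n]
  by simp

lemma bcoset_eq_one_iff:
  assumes "u \<in> carrier B"
  shows "bcoset B J u = \<one>\<^bsub>add_group (factor B J' J)\<^esub> \<longleftrightarrow> u \<in> J"
  using A.rcos_self[of u J] J.NA.subgroup_axioms J.NA.rcos_const[OF A.is_group] assms
  by (auto simp: add_group_factor bcoset_def FactGroup_def)

lemma factor_prime_bcong_int_pow:
  assumes p: "Factorial_Ring.prime (card (carrier (factor B J' J)))"
    and x: "x \<in> J'" "x \<notin> J" and z: "z \<in> J'"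
  shows "\<exists>k::int. bcong B J z (x [^]\<^bsub>add_group B\<^esub> k)"
proof -
  interpret F: group "add_group (factor B J' J)" by (rule group_factor)
  have "bcoset B J x \<noteq> \<one>\<^bsub>add_group (factor B J' J)\<^esub>"
    using bcoset_eq_one_iff x J'.ideal_carrier by simp
  then obtain k :: int where "bcoset B J z = bcoset B J x [^]\<^bsub>add_group (factor B J' J)\<^esub> k"
    using F.prime_order_pow_generates[of "bcoset B J x" "bcoset B J z"] p x z carrier_factor_eq
    by (auto simp: order_def)
  then show ?thesis using bcoset_int_pow[OF x(1)] by (auto simp: bcong_def)
qed

lemma factor_cyclic_bcong_commensurable:
  assumes cyc: "cyclic_group (add_group (factor B J' J))"
    and x: "x \<in> J'" "x \<notin> J" and z: "z \<in> J'"
  shows "\<exists>(a::int) (b::int). a \<noteq> 0 \<and>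
    bcong B J (z [^]\<^bsub>add_group B\<^esub> a) (x [^]\<^bsub>add_group B\<^esub> b)"
proof -
  interpret F: group "add_group (factor B J' J)" by (rule group_factor)
  have "bcoset B J x \<noteq> \<one>\<^bsub>add_group (factor B J' J)\<^esub>"
    using bcoset_eq_one_iff x J'.ideal_carrier by simp
  then obtain a b :: int where "a \<noteq> 0" and
    "bcoset B J z [^]\<^bsub>add_group (factor B J' J)\<^esub> a = bcoset B J x [^]\<^bsub>add_group (factor B J' J)\<^esub> b"
    using F.cyclic_group_pow_commensurable[OF cyc, of "bcoset B J x" "bcoset B J z"] x z carrier_factor_eq
    by auto
  then show ?thesis using bcoset_int_pow[OF x(1)] bcoset_int_pow[OF z] by (auto simp: bcong_def)
qed

lemma factor_infinite_cyclic_bcong_root: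
  assumes cyc: "cyclic_group (add_group (factor B J' J))" and inf: "infinite (carrier (factor B J' J))"
    and u: "u \<in> J'" and v: "v \<in> J'" and "a \<noteq> 0"
    and uv: "bcong B J (u [^]\<^bsub>add_group B\<^esub> a) (v [^]\<^bsub>add_group B\<^esub> (a::int))"
  shows "bcong B J u v"
proof -
  interpret F: group "add_group (factor B J' J)" by (rule group_factor)
  have "bcoset B J u [^]\<^bsub>add_group (factor B J' J)\<^esub> a = bcoset B J v [^]\<^bsub>add_group (factor B J' J)\<^esub> a"
    using uv bcoset_int_pow[OF u] bcoset_int_pow[OF v] by (simp add: bcong_def)
  then show ?thesis
    using F.infinite_cyclic_group_pow_inj[OF cyc _ _ _ \<open>a \<noteq> 0\<close>] inf u v carrier_factor_eq
    by (auto simp: bcong_def)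
qed

end

context
  fixes I J J' :: "'a set"
  assumes I: "brace_ideal B I" and J: "brace_ideal B J" and J': "brace_ideal B J'"
    and JJ': "J \<subseteq> J'"
begin

interpretation I: skew_brace_ideal B I by unfold_locales (rule I)
interpretation J: skew_brace_ideal B J by unfold_locales (rule J)
interpretation J': skew_brace_ideal B J' by unfold_locales (rule J')

private abbreviation "C \<equiv> sub_brace B I"

private lemma ideal_Int_sub_brace: "brace_ideal C (I \<inter> J)"
  using I.brace_ideal_sub_brace[OF brace_ideal_Int[OF I J]] by simp

interpretation C: skew_brace_ideal C "I \<inter> J"
  by unfold_locales (simp_all add: I.is_brace_sub_brace ideal_Int_sub_brace)

lemma prime_factor_Int_subset_zeta_mod:
  assumes p: "Factorial_Ring.prime (card (carrier (factor B J' J)))"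
    and x: "x \<in> I \<inter> J'" "x \<notin> J" "x \<in> zeta_mod C (I \<inter> J)"
  shows "I \<inter> J' \<subseteq> zeta_mod C (I \<inter> J)"
proof
  interpret W: skew_brace_ideal C "zeta_mod C (I \<inter> J)"
    by unfold_locales (rule C.ideal_zeta_mod)
  fix z assume z: "z \<in> I \<inter> J'"
  obtain k :: int where zk: "bcong B J z (x [^]\<^bsub>add_group B\<^esub> k)"
    using factor_prime_bcong_int_pow[OF J J' JJ' p] x z by blast
  have "x [^]\<^bsub>add_group B\<^esub> k \<in> zeta_mod C (I \<inter> J)"
    using W.ideal_int_pow_closed[OF x(3), of k] I.sub_brace_int_pow x(1) by simp
  moreover have "bcong B (I \<inter> J) z (x [^]\<^bsub>add_group B\<^esub> k)"
    using bcong_Int_iff_of_mem[OF I J] I.ideal_int_pow_closed x(1) z zk by simp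
  ultimately show "z \<in> zeta_mod C (I \<inter> J)"
    using C.zeta_mod_bcong_closed z by (simp add: bcong_sub_brace)
qed

lemma infinite_cyclic_factor_lam_bcong:
  assumes cyc: "cyclic_group (add_group (factor B J' J))" and inf: "infinite (carrier (factor B J' J))"
    and x: "x \<in> I \<inter> J'" "x \<notin> J" "x \<in> zeta_mod C (I \<inter> J)"
    and z: "z \<in> I \<inter> J'" and y: "y \<in> I"
  shows "bcong B J (lam y z) z"
proof -
  have xB: "x \<in> carrier B" and yB: "y \<in> carrier B" and zB: "z \<in> carrier B"
    using x y z I.ideal_carrier by auto
  obtain a b :: int where "a \<noteq> 0"
    and zx: "bcong B J (z [^]\<^bsub>add_group B\<^esub> a) (x [^]\<^bsub>add_group B\<^esub> b)"
    using factor_cyclic_bcong_commensurable[OF J J' JJ' cyc] x z by blast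
  have "bcong B (I \<inter> J) (lam y x) x"
    using C.zeta_mod_lam_bcong[OF x(3)] y I.sub_brace_lam by (simp add: bcong_sub_brace)
  then have yx: "bcong B J (lam y x) x"
    using bcong_Int_iff_of_mem[OF I J] I.ideal_lam_closed x(1) y yB by auto
  have "lam y z [^]\<^bsub>add_group B\<^esub> a = lam y (z [^]\<^bsub>add_group B\<^esub> a)"
    using yB zB by (simp add: lam_int_pow)
  also have "bcong B J \<dots> (lam y (x [^]\<^bsub>add_group B\<^esub> b))"
    using J.bcong_lam[OF yB yB _ _ J.bcong_refl zx] zB xB by simp
  also have "lam y (x [^]\<^bsub>add_group B\<^esub> b) = lam y x [^]\<^bsub>add_group B\<^esub> b"
    using yB xB by (simp add: lam_int_pow)
  also have "bcong B J \<dots> (x [^]\<^bsub>add_group B\<^esub> b)"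
    using J.bcong_int_pow[OF _ xB yx] yB xB by simp
  also have "bcong B J \<dots> (z [^]\<^bsub>add_group B\<^esub> a)"
    using J.bcong_sym[OF zx] .
  finally show ?thesis
    using factor_infinite_cyclic_bcong_root[OF J J' JJ' cyc inf _ _ \<open>a \<noteq> 0\<close>]
      J'.ideal_lam_closed[OF yB] z by blast
qed

lemma infinite_cyclic_factor_Int_subset_zeta_mod:
  assumes cyc: "cyclic_group (add_group (factor B J' J))" and inf: "infinite (carrier (factor B J' J))"
    and soc: "J' \<subseteq> Soc_mod B J"
    and x: "x \<in> I \<inter> J'" "x \<notin> J" "x \<in> zeta_mod C (I \<inter> J)"
  shows "I \<inter> J' \<subseteq> zeta_mod C (I \<inter> J)"
proof
  fix z assume z: "z \<in> I \<inter> J'"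
  have "bcong B J (lam z y) y \<and> bcong B J (z \<boxplus> y) (y \<boxplus> z) \<and> bcong B J (z \<boxtimes> y) (y \<boxtimes> z)"
    if y: "y \<in> I" for y
  proof -
    have yB: "y \<in> carrier B" and zB: "z \<in> carrier B" using y z I.ideal_carrier by auto
    have "bcong B J (lam z y) y" "bcong B J (z \<boxplus> y) (y \<boxplus> z)"
      using soc z J.Soc_mod_iff yB by blast+
    then show ?thesis
      using J.bcong_mul_commute[OF zB yB] infinite_cyclic_factor_lam_bcong[OF cyc inf x z y] by blast
  qed
  then show "z \<in> zeta_mod C (I \<inter> J)"
    using z I.zeta_mod_sub_brace_iff[OF ideal_Int_sub_brace] bcong_Int_iff_of_mem[OF I J]
      I.ideal_lam_closed I.ideal_add_closed I.ideal_mul_closed I.ideal_carrier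
    by auto
qed

lemma supersoluble_step_Int_subset_zeta_mod:
  assumes nilp: "centrally_nilpotent C"
    and step: "(infinite (carrier (factor B J' J)) \<and> cyclic_group (add_group (factor B J' J)) \<and>
        J' \<subseteq> Soc_mod B J) \<or> Factorial_Ring.prime (card (carrier (factor B J' J)))"
  shows "I \<inter> J' \<subseteq> zeta_mod C (I \<inter> J)"
proof (cases "I \<inter> J' \<subseteq> J")
  case True
  then show ?thesis using C.ideal_subset_zeta_mod by blast
next
  case False
  interpret C: skew_brace C by unfold_locales (rule I.is_brace_sub_brace)
  obtain m where m: "upper_zeta C m = carrier C" using nilp by (auto simp: centrally_nilpotent_def)
  have "brace_ideal C (I \<inter> J')"
    using I.brace_ideal_sub_brace[OF brace_ideal_Int[OF I J']] by simp
  moreover have "\<not> I \<inter> J' \<subseteq> I \<inter> J" using False by blast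
  ultimately obtain x where "x \<in> I \<inter> J' - I \<inter> J" "x \<in> zeta_mod C (I \<inter> J)"
    using C.zeta_mod_meets_ideal[OF m ideal_Int_sub_brace] by blast
  then show ?thesis
    using step prime_factor_Int_subset_zeta_mod infinite_cyclic_factor_Int_subset_zeta_mod by blast
qed

end

end

theorem theorem3p36:
  fixes B :: "('a, 'b) brace_scheme" and I :: "'a set"
  assumes "is_brace B"
    and "supersoluble B"
    and "brace_ideal B I"
    and "centrally_nilpotent (sub_brace B I)"
  shows "B_centrally_nilpotent B I"
proof -
  interpret skew_brace B by unfold_locales (rule assms(1))
  interpret I: skew_brace_ideal B I by unfold_locales (rule assms(3))
  obtain n Js where Js0: "Js 0 = {zero}" and Jsn: "Js n = carrier B"
    and ideals: "\<forall>i\<le>n. brace_ideal B (Js i)"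
    and steps: "\<forall>i<n. Js i \<subseteq> Js (Suc i) \<and>
      ((infinite (carrier (factor B (Js (Suc i)) (Js i))) \<and>
        cyclic_group (add_group (factor B (Js (Suc i)) (Js i))) \<and>
        Js (Suc i) \<subseteq> Soc_mod B (Js i))
       \<or> Factorial_Ring.prime (card (carrier (factor B (Js (Suc i)) (Js i)))))"
    using assms(2) unfolding supersoluble_def by blast
  have "I \<inter> Js (Suc i) \<subseteq> zeta_mod (sub_brace B I) (I \<inter> Js i)" if "i < n" for i
    using supersoluble_step_Int_subset_zeta_mod[OF assms(3)] ideals steps assms(4) that by simp
  moreover have "I \<inter> Js 0 = {zero}" "I \<inter> Js n = I" using Js0 Jsn I.ideal_subset by auto
  ultimately show ?thesis
    unfolding B_centrally_nilpotent_def using ideals steps brace_ideal_Int[OF assms(3)]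
    by (intro exI[of _ n] exI[of _ "\<lambda>i. I \<inter> Js i"]) auto
qed

end
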